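(* Let $d$ be an odd integer. Then $U=\{(0,0)\}\cup\{(e,f)\in\mathcal{B}\mid f=d\}$ is avoidable.
   Context: The bicyclic inverse semigroup is $\mathcal{B}=\{(a,b)\in\mathbb{Z}\times\mathbb{Z}\mid a\ge 0,\ a+b\ge 0\}$ with multiplication $(a,b)(c,d)=(\max\{c+d,a\}-d,\ b+d)$. A subset $U\subseteq\mathcal{B}$ is called avoidable if $\mathcal{B}$ can be partitioned into two subsets $A$ and $B$ such that no element of $U$ can be written as a product $xy$ of two distinct elements $x\neq y$ both in $A$, or both in $B$. *)

theory Defs
  imports Main
begin

definition bicyclic :: "(int \<times> int) set" where
  "bicyclic = {(a, b). a \<ge> 0 \<and> a + b \<ge> 0}"

fun bmult :: "int \<times> int \<Rightarrow> int \<times> int \<Rightarrow> int \<times> int" where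
  "bmult (a, b) (c, d) = (max (c + d) a - d, b + d)"

definition avoidable :: "(int \<times> int) set \<Rightarrow> bool" where
  "avoidable U \<longleftrightarrow> U \<subseteq> bicyclic \<and>
     (\<exists>A B. A \<union> B = bicyclic \<and> A \<inter> B = {} \<and>
        (\<forall>x\<in>A. \<forall>y\<in>A. x \<noteq> y \<longrightarrow> bmult x y \<notin> U) \<and>
        (\<forall>x\<in>B. \<forall>y\<in>B. x \<noteq> y \<longrightarrow> bmult x y \<notin> U))"

end

theory Submission
  imports Defs
begin

text \<open>Colour an element by its second coordinate, which is additive under multiplication.
  A product lands on the line \<open>f = d\<close> only if the factors have second coordinates \<open>b\<close> and
  \<open>d - b\<close>, and it equals the identity \<open>(0, 0)\<close> only for \<open>x = (a, -a)\<close>, \<open>y = (0, a)\<close>.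
  So it suffices to 2-colour \<open>\<int>\<close> such that both \<open>b \<mapsto> d - b\<close> and \<open>b \<mapsto> -b\<close> (for \<open>b \<noteq> 0\<close>)
  swap the colours. Their composite is translation by \<open>d\<close>, so colour the residues modulo
  \<open>d\<close> by the half of the period they lie in (possible as \<open>d\<close> is odd) and the multiples
  \<open>k d\<close> by the sign of \<open>k\<close>.\<close>

lemma snd_bmult: "snd (bmult x y) = snd x + snd y"
  by (cases x; cases y) simp

lemma bmult_eq_identityD:
  assumes "x \<in> bicyclic" "y \<in> bicyclic" "bmult x y = (0, 0)"
  shows "\<exists>a\<ge>0. x = (a, -a) \<and> y = (0, a)"
proof -
  obtain a b c f where xy: "x = (a, b)" "y = (c, f)"
    by fastforce
  with assms have "a \<ge> 0" "a + b \<ge> 0" "c \<ge> 0" "b + f = 0" "max (c + f) a = f"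
    by (auto simp: bicyclic_def)
  then have "c = 0" "f = a" "b = -a"
    by linarith+
  with xy \<open>a \<ge> 0\<close> show ?thesis
    by blast
qed

lemma avoidable_by_colouring:
  fixes P :: "int \<times> int \<Rightarrow> bool"
  assumes "U \<subseteq> bicyclic"
    and "\<And>x y. x \<in> bicyclic \<Longrightarrow> y \<in> bicyclic \<Longrightarrow> x \<noteq> y \<Longrightarrow> P x = P y \<Longrightarrow> bmult x y \<notin> U"
  shows "avoidable U"
proof -
  define A where "A = {x \<in> bicyclic. P x}"
  define B where "B = {x \<in> bicyclic. \<not> P x}"
  have "A \<union> B = bicyclic" "A \<inter> B = {}"
    by (auto simp: A_def B_def)
  moreover have "\<forall>x\<in>A. \<forall>y\<in>A. x \<noteq> y \<longrightarrow> bmult x y \<notin> U"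
    using assms(2) by (auto simp: A_def)
  moreover have "\<forall>x\<in>B. \<forall>y\<in>B. x \<noteq> y \<longrightarrow> bmult x y \<notin> U"
    using assms(2) by (auto simp: B_def)
  ultimately show ?thesis
    unfolding avoidable_def using assms(1) by blast
qed

lemma avoidable_by_snd_colouring:
  fixes \<chi> :: "int \<Rightarrow> bool"
  assumes reflect: "\<And>b. \<chi> (d - b) \<noteq> \<chi> b"
    and uminus: "\<And>a. a > 0 \<Longrightarrow> \<chi> (-a) \<noteq> \<chi> a"
  shows "avoidable ({(0, 0)} \<union> {(e, f) \<in> bicyclic. f = d})"
proof (rule avoidable_by_colouring[where P = "\<chi> \<circ> snd"])
  show "{(0, 0)} \<union> {(e, f) \<in> bicyclic. f = d} \<subseteq> bicyclic"
    by (auto simp: bicyclic_def)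
next
  fix x y
  assume x: "x \<in> bicyclic" and y: "y \<in> bicyclic" and "x \<noteq> y"
    and same: "(\<chi> \<circ> snd) x = (\<chi> \<circ> snd) y"
  have "bmult x y \<noteq> (0, 0)"
  proof
    assume "bmult x y = (0, 0)"
    then obtain a where "a \<ge> 0" "x = (a, -a)" "y = (0, a)"
      using bmult_eq_identityD[OF x y] by blast
    with \<open>x \<noteq> y\<close> same uminus[of a] show False
      by auto
  qed
  moreover have "snd (bmult x y) \<noteq> d"
    using same reflect[of "snd x"] by (auto simp: snd_bmult)
  ultimately show "bmult x y \<notin> {(0, 0)} \<union> {(e, f) \<in> bicyclic. f = d}"
    by auto
qed

definition half_colour :: "int \<Rightarrow> int \<Rightarrow> bool" where
  "half_colour e b = (if e dvd b then b div e > 0 else 2 * (b mod e) < e)"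

lemma half_colour_uminus:
  assumes "odd e" "b \<noteq> 0"
  shows "half_colour e (-b) \<longleftrightarrow> \<not> half_colour e b"
proof (cases "e dvd b")
  case True
  then obtain k where b: "b = e * k" ..
  from assms have "e \<noteq> 0" "k \<noteq> 0"
    unfolding b by auto
  then have "b div e = k" "(-b) div e = -k"
    unfolding b by (simp_all flip: mult_minus_right)
  with True \<open>k \<noteq> 0\<close> show ?thesis
    by (auto simp: half_colour_def)
next
  case False
  then have "(-b) mod e = e - b mod e"
    by (simp add: zmod_zminus1_eq_if dvd_eq_mod_eq_0)
  moreover have "2 * (b mod e) \<noteq> e"
    using \<open>odd e\<close> by (metis dvd_triv_left)
  ultimately show ?thesis
    using False by (auto simp: half_colour_def)
qed

lemma half_colour_add_period:
  assumes "odd e" "b \<noteq> 0"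
  shows "half_colour e (b + e) \<longleftrightarrow> half_colour e b"
proof (cases "e dvd b")
  case True
  then obtain k where b: "b = e * k" ..
  from assms have "e \<noteq> 0" "k \<noteq> 0"
    unfolding b by auto
  then have "b div e = k" "(b + e) div e = k + 1"
    unfolding b by (simp_all add: div_add_self2)
  with True \<open>k \<noteq> 0\<close> show ?thesis
    by (auto simp: half_colour_def)
qed (simp add: half_colour_def)

lemma half_colour_reflect:
  assumes "odd e"
  shows "half_colour e (e - b) \<longleftrightarrow> \<not> half_colour e b"
proof (cases "b = 0")
  case True
  from \<open>odd e\<close> have "e \<noteq> 0"
    by auto
  with True show ?thesis
    by (simp add: half_colour_def)
next
  case False
  have "half_colour e (e - b) \<longleftrightarrow> half_colour e (-b)"
    using half_colour_add_period[OF assms, of "-b"] False by (simp add: add.commute)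
  with half_colour_uminus[OF assms False] show ?thesis
    by blast
qed

theorem proposition6p2:
  fixes d :: int
  assumes "odd d"
  shows "avoidable ({(0, 0)} \<union> {(e, f) \<in> bicyclic. f = d})"
proof (rule avoidable_by_snd_colouring)
  show "half_colour d (d - b) \<noteq> half_colour d b" for b
    using half_colour_reflect[OF assms] by blast
  show "half_colour d (-a) \<noteq> half_colour d a" if "a > 0" for a
    using half_colour_uminus[OF assms] that by force
qed

end
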